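(* Let $d>k\geq1$ be integers, let $\beta>0$ and $\lambda_k>2\sqrt{\beta}$, and let $A:=\mathrm{diag}(\lambda_k,\dots,\lambda_k,2\sqrt\beta,\dots,2\sqrt\beta)\in\mathbb{R}^{d\times d}$, with $\lambda_k$ repeated $k$ times and $2\sqrt\beta$ repeated $d-k$ times. Let $U_k\in\mathbb{R}^{d\times k}$ be the matrix of the first $k$ standard basis vectors and $U_{-k}\in\mathbb{R}^{d\times(d-k)}$ that of the last $d-k$ standard basis vectors. Let $\varepsilon\in(0,1)$. Then there exist $X_0\in\mathrm{St}(d,k)$ with $\cos\theta_k(U_k,X_0)>0$ and perturbations $(\Xi_t)_{t\geq0}\subset\mathbb{R}^{d\times k}$ satisfying, for all $t\geq0$, $U_{-k}^\top\Xi_t=0$ and $\|U_k^\top\Xi_t\|_2\leq(\lambda_k-2\sqrt\beta)\cos\theta_k(U_k,X_t)$, such that the ANPM iterates $(X_t)_{t\geq0}$ on $A$ with momentum $\beta$ and these perturbations satisfy $\tan\theta_k(U_k,X_t)>\varepsilon$ for all $t\geq0$.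
   Context: $\mathrm{St}(d,k):=\{X\in\mathbb{R}^{d\times k}:X^\top X=I_k\}$. For $Y\in\mathbb{R}^{d\times k}$, $\mathrm{QR}(Y)$ is the pair $(X,R)$ with $Y=XR$, $X\in\mathrm{St}(d,k)$, $R$ upper triangular $k\times k$ with nonnegative diagonal (unique, $R$ invertible, when $Y$ has full column rank). For $U,X\in\mathrm{St}(d,k)$, $\theta_k(U,X):=\arccos\sigma_{\min}(U^\top X)\in[0,\pi/2]$. ANPM with momentum $\beta$ and perturbations $(\Xi_t)$ (which may depend on the iterates): given $X_0\in\mathrm{St}(d,k)$, $(X_1,R_1)=\mathrm{QR}(\tfrac12 AX_0+\Xi_0)$, and for $t\geq1$, $Y_{t+1}=AX_t-\beta X_{t-1}R_t^{-1}+\Xi_t$, $(X_{t+1},R_{t+1})=\mathrm{QR}(Y_{t+1})$. *)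

theory Defs
  imports "Jordan_Normal_Form.Matrix" "Jordan_Normal_Form.Gauss_Jordan_Elimination"
begin

definition stiefel :: "nat \<Rightarrow> nat \<Rightarrow> real mat set" where
  "stiefel d k = {X. X \<in> carrier_mat d k \<and> transpose_mat X * X = 1\<^sub>m k}"

definition vnorm :: "real vec \<Rightarrow> real" where
  "vnorm v = sqrt (v \<bullet> v)"

(* smallest singular value of M (with at least as many rows as columns):
   min of |Mv| over unit vectors v *)
definition sigma_min :: "real mat \<Rightarrow> real" where
  "sigma_min M = Inf {vnorm (M *\<^sub>v v) | v. v \<in> carrier_vec (dim_col M) \<and> vnorm v = 1}"

definition spec_norm :: "real mat \<Rightarrow> real" where
  "spec_norm M = Sup {vnorm (M *\<^sub>v v) | v. v \<in> carrier_vec (dim_col M) \<and> vnorm v = 1}"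

definition theta :: "real mat \<Rightarrow> real mat \<Rightarrow> real" where
  "theta U X = arccos (sigma_min (transpose_mat U * X))"

definition is_QR :: "nat \<Rightarrow> nat \<Rightarrow> real mat \<Rightarrow> real mat \<Rightarrow> real mat \<Rightarrow> bool" where
  "is_QR d k Y X R \<longleftrightarrow> X \<in> stiefel d k \<and> R \<in> carrier_mat k k \<and> upper_triangular R \<and>
     (\<forall>i<k. R $$ (i,i) \<ge> 0) \<and> Y = X * R"

(* (X_t, R_t)_t are the (well-defined: R_t invertible) ANPM iterates on A with momentum beta
   and perturbations Xi; R 0 is unused *)
definition anpm :: "nat \<Rightarrow> nat \<Rightarrow> real mat \<Rightarrow> real \<Rightarrow> (nat \<Rightarrow> real mat)
    \<Rightarrow> (nat \<Rightarrow> real mat) \<Rightarrow> (nat \<Rightarrow> real mat) \<Rightarrow> bool" where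
  "anpm d k A \<beta> Xi X R \<longleftrightarrow>
     X 0 \<in> stiefel d k \<and>
     is_QR d k ((1/2) \<cdot>\<^sub>m (A * X 0) + Xi 0) (X 1) (R 1) \<and> invertible_mat (R 1) \<and>
     (\<forall>t\<ge>1. is_QR d k (A * X t - \<beta> \<cdot>\<^sub>m (X (t - 1) * the (mat_inverse (R t))) + Xi t)
                 (X (t + 1)) (R (t + 1)) \<and> invertible_mat (R (t + 1)))"

definition diagA :: "nat \<Rightarrow> nat \<Rightarrow> real \<Rightarrow> real \<Rightarrow> real mat" where
  "diagA d k lam \<beta> = mat_diag d (\<lambda>i. if i < k then lam else 2 * sqrt \<beta>)"

definition Ufirst :: "nat \<Rightarrow> nat \<Rightarrow> real mat" where
  "Ufirst d k = mat d k (\<lambda>(i,j). if i = j then 1 else 0)"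

definition Ulast :: "nat \<Rightarrow> nat \<Rightarrow> real mat" where
  "Ulast d k = mat d (d - k) (\<lambda>(i,j). if i = k + j then 1 else 0)"

end

theory Submission
  imports Defs
begin

(* The iterates can be kept frozen at one point X_0 of St(d,k): its first column is
   (3/5) e_1 + (4/5) e_(k+1), so cos theta_k = 3/5 and tan theta_k = 4/3 > epsilon, and its other
   columns are e_2, ..., e_k. The admissible perturbation size (lambda_k - 2 sqrt beta) (3/5) is
   exactly what is needed to lower the e_1 component of A X_0 to that of 2 sqrt beta X_0. With
   (R_t)_11 = sqrt beta the momentum update then maps the first column to
   (2 sqrt beta - beta / sqrt beta) = sqrt beta times itself, while the other columns are
   eigenvectors of A, rescaled by the positive numbers q_(t+1) = lambda_k - beta / q_t.
   So the QR step returns X_0 again every time. *)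

lemma Ufirst_transpose_mult:
  assumes M: "M \<in> carrier_mat d n" and "k \<le> d"
  shows "transpose_mat (Ufirst d k) * M = mat k n (\<lambda>(i,j). M $$ (i,j))"
proof (rule eq_matI)
  fix i j assume "i < dim_row (mat k n (\<lambda>(i,j). M $$ (i,j)))" "j < dim_col (mat k n (\<lambda>(i,j). M $$ (i,j)))"
  hence i: "i < k" and j: "j < n" by auto
  have "(transpose_mat (Ufirst d k) * M) $$ (i,j) = (\<Sum>l<d. (if l = i then 1 else 0) * M $$ (l,j))"
    using i j M \<open>k \<le> d\<close> unfolding Ufirst_def
    by (auto simp: scalar_prod_def lessThan_atLeast0 intro!: sum.cong)
  also have "\<dots> = M $$ (i,j)" using i \<open>k \<le> d\<close> by (subst sum.remove[of _ i]) auto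
  finally show "(transpose_mat (Ufirst d k) * M) $$ (i,j) = mat k n (\<lambda>(i,j). M $$ (i,j)) $$ (i,j)"
    using i j by simp
qed (use M in \<open>auto simp: Ufirst_def\<close>)

lemma Ulast_transpose_mult:
  assumes M: "M \<in> carrier_mat d n" and "k \<le> d"
  shows "transpose_mat (Ulast d k) * M = mat (d - k) n (\<lambda>(i,j). M $$ (k + i, j))"
proof (rule eq_matI)
  fix i j assume "i < dim_row (mat (d - k) n (\<lambda>(i,j). M $$ (k + i, j)))"
    "j < dim_col (mat (d - k) n (\<lambda>(i,j). M $$ (k + i, j)))"
  hence i: "i < d - k" and j: "j < n" by auto
  have "(transpose_mat (Ulast d k) * M) $$ (i,j) = (\<Sum>l<d. (if l = k + i then 1 else 0) * M $$ (l,j))"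
    using i j M \<open>k \<le> d\<close> unfolding Ulast_def
    by (auto simp: scalar_prod_def lessThan_atLeast0 intro!: sum.cong)
  also have "\<dots> = M $$ (k + i, j)" using i by (subst sum.remove[of _ "k + i"]) auto
  finally show "(transpose_mat (Ulast d k) * M) $$ (i,j) = mat (d - k) n (\<lambda>(i,j). M $$ (k + i, j)) $$ (i,j)"
    using i j by simp
qed (use M in \<open>auto simp: Ulast_def\<close>)

lemma vnorm_eq_sqrt_sum: "vnorm v = sqrt (\<Sum>i<dim_vec v. (v $ i)\<^sup>2)"
  unfolding vnorm_def scalar_prod_def by (simp add: lessThan_atLeast0 power2_eq_square)

lemma mat_diag_mult_vec:
  assumes "v \<in> carrier_vec n"
  shows "mat_diag n f *\<^sub>v v = vec n (\<lambda>i. f i * v $ i)"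
proof (rule eq_vecI)
  fix i assume "i < dim_vec (vec n (\<lambda>i. f i * v $ i))"
  hence i: "i < n" by simp
  have "(mat_diag n f *\<^sub>v v) $ i = (\<Sum>l<n. (if i = l then f l else 0) * v $ l)"
    using i assms by (auto simp: mat_diag_def scalar_prod_def lessThan_atLeast0 intro!: sum.cong)
  also have "\<dots> = f i * v $ i" using i by (subst sum.remove[of _ i]) auto
  finally show "(mat_diag n f *\<^sub>v v) $ i = vec n (\<lambda>i. f i * v $ i) $ i" using i by simp
qed (simp add: mat_diag_def)

lemma vnorm_mat_diag_mult_vec:
  assumes "v \<in> carrier_vec n"
  shows "vnorm (mat_diag n f *\<^sub>v v) = sqrt (\<Sum>i<n. (f i)\<^sup>2 * (v $ i)\<^sup>2)"
  using assms by (simp add: mat_diag_mult_vec vnorm_eq_sqrt_sum power_mult_distrib)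

lemma vnorm_mat_diag_mult_unit_vec:
  assumes "j < n"
  shows "vnorm (mat_diag n f *\<^sub>v unit_vec n j) = \<bar>f j\<bar>"
proof -
  have "(\<Sum>i<n. (f i)\<^sup>2 * (unit_vec n j $ i)\<^sup>2) = (f j)\<^sup>2"
    using assms by (subst sum.remove[of _ j]) auto
  thus ?thesis by (simp add: vnorm_mat_diag_mult_vec)
qed

lemma sum_squares_unit_vec:
  assumes "v \<in> carrier_vec n" and "vnorm v = 1"
  shows "(\<Sum>i<n. (v $ i)\<^sup>2) = 1"
  using assms by (simp add: vnorm_eq_sqrt_sum)

lemma vnorm_mat_diag_mult_unit_bounds:
  fixes f :: "nat \<Rightarrow> real"
  assumes "0 < n" and v: "v \<in> carrier_vec n" "vnorm v = 1"
  shows "(MIN i\<in>{..<n}. \<bar>f i\<bar>) \<le> vnorm (mat_diag n f *\<^sub>v v)"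
    and "vnorm (mat_diag n f *\<^sub>v v) \<le> (MAX i\<in>{..<n}. \<bar>f i\<bar>)"
proof -
  let ?m = "MIN i\<in>{..<n}. \<bar>f i\<bar>" and ?M = "MAX i\<in>{..<n}. \<bar>f i\<bar>"
  have m: "0 \<le> ?m" "\<And>i. i < n \<Longrightarrow> ?m \<le> \<bar>f i\<bar>"
    using \<open>0 < n\<close> by (subst Min_ge_iff; auto) (intro Min_le; auto)
  have M: "\<And>i. i < n \<Longrightarrow> \<bar>f i\<bar> \<le> ?M" by simp
  have "?m\<^sup>2 = (\<Sum>i<n. ?m\<^sup>2 * (v $ i)\<^sup>2)"
    using sum_squares_unit_vec[OF v] by (simp add: sum_distrib_left[symmetric])
  also have "\<dots> \<le> (\<Sum>i<n. (f i)\<^sup>2 * (v $ i)\<^sup>2)"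
    using m by (intro sum_mono mult_right_mono) (auto intro: power_mono simp flip: abs_le_square_iff)
  finally show "?m \<le> vnorm (mat_diag n f *\<^sub>v v)"
    unfolding vnorm_mat_diag_mult_vec[OF v(1)] by (rule real_le_rsqrt)
  have "(\<Sum>i<n. (f i)\<^sup>2 * (v $ i)\<^sup>2) \<le> (\<Sum>i<n. ?M\<^sup>2 * (v $ i)\<^sup>2)"
    using M by (intro sum_mono mult_right_mono)
      (auto simp flip: abs_le_square_iff intro: order_trans[OF _ abs_ge_self])
  also have "\<dots> = ?M\<^sup>2"
    using sum_squares_unit_vec[OF v] by (simp add: sum_distrib_left[symmetric])
  finally show "vnorm (mat_diag n f *\<^sub>v v) \<le> ?M"
    unfolding vnorm_mat_diag_mult_vec[OF v(1)] using M[OF \<open>0 < n\<close>] by (intro real_le_lsqrt) auto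
qed

lemma sigma_min_mat_diag:
  fixes f :: "nat \<Rightarrow> real"
  assumes "0 < n"
  shows "sigma_min (mat_diag n f) = (MIN i\<in>{..<n}. \<bar>f i\<bar>)"
proof -
  have "(MIN i\<in>{..<n}. \<bar>f i\<bar>) \<in> (\<lambda>i. \<bar>f i\<bar>) ` {..<n}"
    using \<open>0 < n\<close> by (intro Min_in) auto
  then obtain j where j: "j < n" "\<bar>f j\<bar> = (MIN i\<in>{..<n}. \<bar>f i\<bar>)" by auto
  show ?thesis
    unfolding sigma_min_def
  proof (rule cInf_eq_minimum)
    show "(MIN i\<in>{..<n}. \<bar>f i\<bar>) \<in> {vnorm (mat_diag n f *\<^sub>v v) |v. v \<in> carrier_vec (dim_col (mat_diag n f)) \<and> vnorm v = 1}"
      using j vnorm_mat_diag_mult_unit_vec[OF j(1), of f]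
      by (intro CollectI exI[of _ "unit_vec n j"]) (simp add: mat_diag_def vnorm_def)
  qed (use vnorm_mat_diag_mult_unit_bounds(1)[OF assms] in \<open>auto simp: mat_diag_def\<close>)
qed

lemma spec_norm_mat_diag:
  fixes f :: "nat \<Rightarrow> real"
  assumes "0 < n"
  shows "spec_norm (mat_diag n f) = (MAX i\<in>{..<n}. \<bar>f i\<bar>)"
proof -
  have "(MAX i\<in>{..<n}. \<bar>f i\<bar>) \<in> (\<lambda>i. \<bar>f i\<bar>) ` {..<n}"
    using \<open>0 < n\<close> by (intro Max_in) auto
  then obtain j where j: "j < n" "\<bar>f j\<bar> = (MAX i\<in>{..<n}. \<bar>f i\<bar>)" by auto
  show ?thesis
    unfolding spec_norm_def
  proof (rule cSup_eq_maximum)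
    show "(MAX i\<in>{..<n}. \<bar>f i\<bar>) \<in> {vnorm (mat_diag n f *\<^sub>v v) |v. v \<in> carrier_vec (dim_col (mat_diag n f)) \<and> vnorm v = 1}"
      using j vnorm_mat_diag_mult_unit_vec[OF j(1), of f]
      by (intro CollectI exI[of _ "unit_vec n j"]) (simp add: mat_diag_def vnorm_def)
  qed (use vnorm_mat_diag_mult_unit_bounds(2)[OF assms] in \<open>auto simp: mat_diag_def\<close>)
qed

lemma mat_inverse_eqI:
  fixes A B :: "'a :: field mat"
  assumes A: "A \<in> carrier_mat n n" and B: "B \<in> carrier_mat n n"
    and AB: "A * B = 1\<^sub>m n" and BA: "B * A = 1\<^sub>m n"
  shows "mat_inverse A = Some B"
proof (cases "mat_inverse A")
  case None
  have "A \<in> Units (ring_mat TYPE('a) n ())"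
    using A B AB BA unfolding Units_def ring_mat_def by auto
  with mat_inverse(1)[OF A None, of "()"] show ?thesis by blast
next
  case (Some B')
  from mat_inverse(2)[OF A Some] have AB': "A * B' = 1\<^sub>m n" and B': "B' \<in> carrier_mat n n" by auto
  have "B' = (B * A) * B'" using BA B' by simp
  also have "\<dots> = B * (A * B')" by (rule assoc_mult_mat[OF B A B'])
  also have "\<dots> = B" using AB' B by simp
  finally show ?thesis using Some by simp
qed

lemma mat_diag_inverse:
  fixes f :: "nat \<Rightarrow> 'a :: field"
  assumes "\<And>i. i < n \<Longrightarrow> f i \<noteq> 0"
  shows "mat_diag n f * mat_diag n (\<lambda>i. inverse (f i)) = 1\<^sub>m n"
    and "mat_diag n (\<lambda>i. inverse (f i)) * mat_diag n f = 1\<^sub>m n"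
proof -
  have "mat_diag n (\<lambda>i. f i * inverse (f i)) = 1\<^sub>m n"
    and "mat_diag n (\<lambda>i. inverse (f i) * f i) = 1\<^sub>m n"
    using assms by (auto simp: mat_diag_def intro!: eq_matI)
  then show "mat_diag n f * mat_diag n (\<lambda>i. inverse (f i)) = 1\<^sub>m n"
    and "mat_diag n (\<lambda>i. inverse (f i)) * mat_diag n f = 1\<^sub>m n" by simp_all
qed

lemma mat_inverse_mat_diag:
  fixes f :: "nat \<Rightarrow> 'a :: field"
  assumes "\<And>i. i < n \<Longrightarrow> f i \<noteq> 0"
  shows "mat_inverse (mat_diag n f) = Some (mat_diag n (\<lambda>i. inverse (f i)))"
  using mat_diag_inverse[of n f, OF assms] by (intro mat_inverse_eqI) auto

lemma invertible_mat_diag: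
  fixes f :: "nat \<Rightarrow> 'a :: field"
  assumes "\<And>i. i < n \<Longrightarrow> f i \<noteq> 0"
  shows "invertible_mat (mat_diag n f)"
proof -
  have "dim_row (mat_diag n f) = n" "dim_col (mat_diag n f) = n"
       "dim_row (mat_diag n (\<lambda>i. inverse (f i))) = n"
    by (simp_all add: mat_diag_def)
  with mat_diag_inverse[of n f, OF assms] show ?thesis
    unfolding invertible_mat_def inverts_mat_def square_mat.simps
    by (auto intro!: exI[of _ "mat_diag n (\<lambda>i. inverse (f i))"])
qed

lemma is_QR_mult_mat_diag:
  assumes "X \<in> stiefel d k" and "\<And>j. j < k \<Longrightarrow> 0 \<le> f j"
  shows "is_QR d k (X * mat_diag k f) X (mat_diag k f)"
  using assms unfolding is_QR_def upper_triangular_def by (auto simp: mat_diag_def)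

fun momentum_scale :: "real \<Rightarrow> real \<Rightarrow> nat \<Rightarrow> real" where
  "momentum_scale lam \<beta> 0 = lam / 2"
| "momentum_scale lam \<beta> (Suc t) = lam - \<beta> / momentum_scale lam \<beta> t"

lemma momentum_scale_ge:
  assumes "0 \<le> \<beta>" and "0 < lam" and "2 * sqrt \<beta> \<le> lam"
  shows "lam / 2 \<le> momentum_scale lam \<beta> t"
proof (induction t)
  case 0
  show ?case by simp
next
  case (Suc t)
  have "(2 * sqrt \<beta>)\<^sup>2 \<le> lam\<^sup>2"
    using assms by (intro power_mono) auto
  hence "4 * \<beta> \<le> lam\<^sup>2"
    using assms(1) by (simp add: power_mult_distrib)
  have "\<beta> / momentum_scale lam \<beta> t \<le> \<beta> / (lam / 2)"
    using Suc.IH assms by (intro divide_left_mono) auto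
  also have "\<dots> \<le> lam / 2"
    using \<open>4 * \<beta> \<le> lam\<^sup>2\<close> \<open>0 < lam\<close> by (simp add: field_simps power2_eq_square)
  finally show ?case by simp
qed

definition stuck_iterate :: "nat \<Rightarrow> nat \<Rightarrow> real mat" where
  "stuck_iterate d k = mat d k (\<lambda>(i,j).
     if j = 0 then (if i = 0 then 3/5 else if i = k then 4/5 else 0) else (if i = j then 1 else 0))"

lemma stuck_iterate_carrier: "stuck_iterate d k \<in> carrier_mat d k"
  by (simp add: stuck_iterate_def)

lemma dim_stuck_iterate [simp]:
  "dim_row (stuck_iterate d k) = d" "dim_col (stuck_iterate d k) = k"
  by (simp_all add: stuck_iterate_def)

lemma index_stuck_iterate [simp]:
  "i < d \<Longrightarrow> j < k \<Longrightarrow> stuck_iterate d k $$ (i,j) =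
     (if j = 0 then (if i = 0 then 3/5 else if i = k then 4/5 else 0) else (if i = j then 1 else 0))"
  by (simp add: stuck_iterate_def)

lemma stuck_iterate_stiefel:
  assumes "1 \<le> k" and "k < d"
  shows "stuck_iterate d k \<in> stiefel d k"
  unfolding stiefel_def
proof (intro CollectI conjI stuck_iterate_carrier eq_matI)
  let ?X = "stuck_iterate d k"
  fix i j assume "i < dim_row (1\<^sub>m k :: real mat)" "j < dim_col (1\<^sub>m k :: real mat)"
  hence i: "i < k" and j: "j < k" by auto
  have "(transpose_mat ?X * ?X) $$ (i,j) = (\<Sum>l<d. ?X $$ (l,i) * ?X $$ (l,j))"
    using i j assms by (simp add: scalar_prod_def lessThan_atLeast0)
  also have "\<dots> = (\<Sum>l<d. if i = j then
      (if i = 0 then (if l = 0 then 9/25 else 0) + (if l = k then 16/25 else 0) else (if l = i then 1 else 0))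
      else 0)"
    using i j assms by (intro sum.cong) auto
  also have "\<dots> = 1\<^sub>m k $$ (i,j)"
    using i j assms by (cases "i = j"; cases "j = 0") (simp_all add: sum.distrib)
  finally show "(transpose_mat ?X * ?X) $$ (i,j) = 1\<^sub>m k $$ (i,j)" .
qed auto

lemma Ufirst_transpose_mult_stuck_iterate:
  assumes "k < d"
  shows "transpose_mat (Ufirst d k) * stuck_iterate d k = mat_diag k (\<lambda>j. if j = 0 then 3/5 else 1)"
  using assms
  by (subst Ufirst_transpose_mult[OF stuck_iterate_carrier]) (auto simp: mat_diag_def intro!: eq_matI)

lemma theta_stuck_iterate:
  assumes "1 \<le> k" and "k < d"
  shows "theta (Ufirst d k) (stuck_iterate d k) = arccos (3/5)"
proof -
  have "sigma_min (mat_diag k (\<lambda>j. if j = 0 then 3/5 else 1))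
      = (MIN j\<in>{..<k}. \<bar>if j = 0 then 3/5 else 1 :: real\<bar>)"
    using assms by (intro sigma_min_mat_diag) auto
  also have "\<dots> = 3/5"
    using assms by (intro Min_eqI) (auto intro!: image_eqI[of _ _ 0])
  finally show ?thesis
    unfolding theta_def Ufirst_transpose_mult_stuck_iterate[OF assms(2)] by (rule arg_cong)
qed

lemma cos_theta_stuck_iterate:
  assumes "1 \<le> k" and "k < d"
  shows "cos (theta (Ufirst d k) (stuck_iterate d k)) = 3/5"
  using assms by (simp add: theta_stuck_iterate)

lemma tan_theta_stuck_iterate:
  assumes "1 \<le> k" and "k < d"
  shows "tan (theta (Ufirst d k) (stuck_iterate d k)) = 4/3"
proof -
  have "sin (arccos (3/5 :: real)) = sqrt (1 - (3/5)\<^sup>2)"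
    by (rule sin_arccos) auto
  also have "\<dots> = 4/5"
    by (simp add: real_sqrt_eq_iff power2_eq_square real_sqrt_divide)
  finally show ?thesis
    using assms by (simp add: theta_stuck_iterate tan_def)
qed

(* At t = 0 the update carries the factor 1/2, hence 3/10 instead of 3/5. *)
definition cancelling_perturbation :: "nat \<Rightarrow> nat \<Rightarrow> real \<Rightarrow> real \<Rightarrow> nat \<Rightarrow> real mat" where
  "cancelling_perturbation d k lam \<beta> t = mat d k (\<lambda>(i,j).
     if i = 0 \<and> j = 0 then - (if t = 0 then 3/10 else 3/5) * (lam - 2 * sqrt \<beta>) else 0)"

lemma cancelling_perturbation_carrier: "cancelling_perturbation d k lam \<beta> t \<in> carrier_mat d k"
  by (simp add: cancelling_perturbation_def)

lemma Ulast_transpose_mult_cancelling_perturbation: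
  assumes "1 \<le> k" and "k < d"
  shows "transpose_mat (Ulast d k) * cancelling_perturbation d k lam \<beta> t = 0\<^sub>m (d - k) k"
  using assms
  by (subst Ulast_transpose_mult[OF cancelling_perturbation_carrier])
    (auto simp: cancelling_perturbation_def intro!: eq_matI)

lemma spec_norm_cancelling_perturbation:
  assumes "1 \<le> k" and "k < d" and "2 * sqrt \<beta> \<le> lam"
  shows "spec_norm (transpose_mat (Ufirst d k) * cancelling_perturbation d k lam \<beta> t)
    \<le> (lam - 2 * sqrt \<beta>) * (3/5)"
proof -
  define c where "c = - (if t = 0 then 3/10 else 3/5) * (lam - 2 * sqrt \<beta>)"
  have "transpose_mat (Ufirst d k) * cancelling_perturbation d k lam \<beta> t
      = mat_diag k (\<lambda>j. if j = 0 then c else 0)"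
    using assms by (subst Ufirst_transpose_mult[OF cancelling_perturbation_carrier])
      (auto simp: cancelling_perturbation_def c_def mat_diag_def intro!: eq_matI)
  moreover have "spec_norm (mat_diag k (\<lambda>j. if j = 0 then c else 0))
      = (MAX j\<in>{..<k}. \<bar>if j = 0 then c else 0\<bar>)"
    using assms by (intro spec_norm_mat_diag) auto
  moreover have "\<dots> = \<bar>c\<bar>"
    using assms by (intro Max_eqI) (auto intro!: image_eqI[of _ _ 0])
  moreover have "\<bar>c\<bar> \<le> (lam - 2 * sqrt \<beta>) * (3/5)"
    using assms by (simp add: c_def abs_mult)
  ultimately show ?thesis by simp
qed

(* The diagonal of R_t; the value at t = 0 (where t - 1 truncates) is never read by anpm. *)
definition stuck_scale :: "real \<Rightarrow> real \<Rightarrow> nat \<Rightarrow> nat \<Rightarrow> real" where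
  "stuck_scale lam \<beta> t j = (if j = 0 then sqrt \<beta> else momentum_scale lam \<beta> (t - 1))"

lemma stuck_scale_pos:
  assumes "0 < \<beta>" and "2 * sqrt \<beta> < lam"
  shows "0 < stuck_scale lam \<beta> t j"
proof -
  have "0 < sqrt \<beta>" using assms by simp
  then have "0 < lam" using assms by linarith
  have "lam / 2 \<le> momentum_scale lam \<beta> (t - 1)"
    by (rule momentum_scale_ge) (use assms \<open>0 < lam\<close> in auto)
  then show ?thesis
    using \<open>0 < sqrt \<beta>\<close> \<open>0 < lam\<close> by (auto simp: stuck_scale_def)
qed

lemma first_update_stuck_iterate:
  assumes "1 \<le> k" and "k < d" and "0 < \<beta>"
  shows "(1/2) \<cdot>\<^sub>m (diagA d k lam \<beta> * stuck_iterate d k) + cancelling_perturbation d k lam \<beta> 0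
    = stuck_iterate d k * mat_diag k (stuck_scale lam \<beta> 1)"
  using assms unfolding diagA_def
  by (auto simp: mat_diag_mult_left[OF stuck_iterate_carrier] mat_diag_mult_right[OF stuck_iterate_carrier]
      cancelling_perturbation_def stuck_scale_def field_simps intro!: eq_matI)

lemma momentum_update_stuck_iterate:
  assumes "1 \<le> k" and "k < d" and "0 < \<beta>" and "2 * sqrt \<beta> < lam" and "1 \<le> t"
  shows "diagA d k lam \<beta> * stuck_iterate d k
      - \<beta> \<cdot>\<^sub>m (stuck_iterate d k * mat_diag k (\<lambda>j. inverse (stuck_scale lam \<beta> t j)))
      + cancelling_perturbation d k lam \<beta> t
    = stuck_iterate d k * mat_diag k (stuck_scale lam \<beta> (t + 1))"
proof -
  have q: "0 < momentum_scale lam \<beta> (t - 1)"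
    using stuck_scale_pos[OF assms(3,4), of t 1] by (simp add: stuck_scale_def)
  have "momentum_scale lam \<beta> t = lam - \<beta> / momentum_scale lam \<beta> (t - 1)"
    using \<open>1 \<le> t\<close> by (cases t) auto
  then show ?thesis
    using assms q unfolding diagA_def
    by (auto simp: mat_diag_mult_left[OF stuck_iterate_carrier] mat_diag_mult_right[OF stuck_iterate_carrier]
        cancelling_perturbation_def stuck_scale_def field_simps intro!: eq_matI)
qed

lemma anpm_stuck_iterate:
  assumes "1 \<le> k" and "k < d" and "0 < \<beta>" and "2 * sqrt \<beta> < lam"
  shows "anpm d k (diagA d k lam \<beta>) \<beta> (cancelling_perturbation d k lam \<beta>)
    (\<lambda>_. stuck_iterate d k) (\<lambda>t. mat_diag k (stuck_scale lam \<beta> t))"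
proof -
  have "\<And>t j. 0 < stuck_scale lam \<beta> t j"
    by (rule stuck_scale_pos[OF assms(3,4)])
  then have pos: "\<And>t j. stuck_scale lam \<beta> t j \<noteq> 0" "\<And>t j. 0 \<le> stuck_scale lam \<beta> t j"
    by (metis order_less_irrefl, metis less_imp_le)
  have QR: "\<And>t. is_QR d k (stuck_iterate d k * mat_diag k (stuck_scale lam \<beta> t))
      (stuck_iterate d k) (mat_diag k (stuck_scale lam \<beta> t))"
    using stuck_iterate_stiefel[OF assms(1,2)] pos(2) by (rule is_QR_mult_mat_diag)
  have inv: "\<And>t. invertible_mat (mat_diag k (stuck_scale lam \<beta> t))"
    using pos(1) by (rule invertible_mat_diag)
  have "\<And>t. the (mat_inverse (mat_diag k (stuck_scale lam \<beta> t)))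
      = mat_diag k (\<lambda>j. inverse (stuck_scale lam \<beta> t j))"
    using pos(1) by (simp add: mat_inverse_mat_diag)
  then show ?thesis
    unfolding anpm_def
    using stuck_iterate_stiefel[OF assms(1,2)] QR inv
      first_update_stuck_iterate[OF assms(1-3)] momentum_update_stuck_iterate[OF assms] by auto
qed

theorem theorem4:
  fixes d k :: nat and \<beta> lam \<epsilon> :: real
  assumes "1 \<le> k" and "k < d" and "\<beta> > 0" and "lam > 2 * sqrt \<beta>"
    and "0 < \<epsilon>" and "\<epsilon> < 1"
  shows "\<exists>X R Xi.
    X 0 \<in> stiefel d k \<and> cos (theta (Ufirst d k) (X 0)) > 0 \<and>
    (\<forall>t. Xi t \<in> carrier_mat d k \<and>
         transpose_mat (Ulast d k) * Xi t = 0\<^sub>m (d - k) k \<and>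
         spec_norm (transpose_mat (Ufirst d k) * Xi t)
           \<le> (lam - 2 * sqrt \<beta>) * cos (theta (Ufirst d k) (X t))) \<and>
    anpm d k (diagA d k lam \<beta>) \<beta> Xi X R \<and>
    (\<forall>t. tan (theta (Ufirst d k) (X t)) > \<epsilon>)"
proof (intro exI conjI allI)
  let ?X = "stuck_iterate d k"
  show "?X \<in> stiefel d k"
    using assms(1,2) by (rule stuck_iterate_stiefel)
  show "0 < cos (theta (Ufirst d k) ?X)" and "\<epsilon> < tan (theta (Ufirst d k) ?X)"
    using assms cos_theta_stuck_iterate[OF assms(1,2)] tan_theta_stuck_iterate[OF assms(1,2)]
    by simp_all
  fix t
  show "cancelling_perturbation d k lam \<beta> t \<in> carrier_mat d k"
    by (rule cancelling_perturbation_carrier)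
  show "transpose_mat (Ulast d k) * cancelling_perturbation d k lam \<beta> t = 0\<^sub>m (d - k) k"
    using assms(1,2) by (rule Ulast_transpose_mult_cancelling_perturbation)
  show "spec_norm (transpose_mat (Ufirst d k) * cancelling_perturbation d k lam \<beta> t)
      \<le> (lam - 2 * sqrt \<beta>) * cos (theta (Ufirst d k) ?X)"
    using assms spec_norm_cancelling_perturbation[of k d \<beta> lam t]
    by (simp add: cos_theta_stuck_iterate)
next
  show "anpm d k (diagA d k lam \<beta>) \<beta> (cancelling_perturbation d k lam \<beta>)
      (\<lambda>_. stuck_iterate d k) (\<lambda>t. mat_diag k (stuck_scale lam \<beta> t))"
    using assms(1-4) by (rule anpm_stuck_iterate)
qed

end
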